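(* Let $\mathbf{P}$ be the transition matrix of a Markov chain on a finite state space $V$, let $L\ge0$, $\ell=2^L$, $w_0\in V$, and let $\rho\ge 1$ be an integer. Maintain sequences whose entries are indexed by times in $\{0,1,\dots,\ell\}$. Initially $W_1$ has entry $w_0$ at time $0$ and entry $w_\ell\sim\mathbf{P}^\ell[w_0,\cdot]$ at time $\ell$. At level $i=1,\dots,L$, with $\delta=\ell/2^{i-1}$, the current sequence $W_i$ has entries at times $0,\delta,2\delta,\dots,\ell_i$ for some $\ell_i\le \ell$; between every pair of consecutive entries $x$ (at time $s$) and $x'$ (at time $s+\delta$) insert, at time $s+\delta/2$, a vertex $y$ drawn (conditionally independently given the past) with probability $\mathbf{P}^{\delta/2}[x,y]\mathbf{P}^{\delta/2}[y,x']/\mathbf{P}^{\delta}[x,x']$; then, if the resulting sequence contains at least $\rho$ distinct vertices, delete all entries at times after the first entry at which the $\rho$-th distinct vertex appears. Call the result $W_{i+1}$. Then $W_{L+1}$ has the same distribution as $(X_0,X_1,\dots,X_\tau)$, where $(X_t)$ is the Markov chain with transition matrix $\mathbf{P}$ started at $w_0$ and $\tau$ is the minimum of $\ell$ and the first time $t$ at which $\{X_0,\dots,X_t\}$ contains $\rho$ distinct vertices. *)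

theory Defs
  imports "HOL-Probability.Probability"
begin

text \<open>A Markov chain on the finite state space given by the finite type 'a is
described by its transition kernel P :: 'a \<Rightarrow> 'a pmf, i.e. the row x of the
transition matrix is the distribution P x, so that the matrix entry P[x,y] is pmf (P x) y.\<close>

primrec kpow :: "('a \<Rightarrow> 'a pmf) \<Rightarrow> nat \<Rightarrow> 'a \<Rightarrow> 'a pmf" where
  "kpow P 0 x = return_pmf x"
| "kpow P (Suc n) x = bind_pmf (P x) (kpow P n)"

definition mpow :: "('a \<Rightarrow> 'a pmf) \<Rightarrow> nat \<Rightarrow> 'a \<Rightarrow> 'a \<Rightarrow> real" where
  "mpow P n x y = pmf (kpow P n x) y"

text \<open>Bridge distribution of the midpoint: y with probability
  P^(d/2)[x,y] P^(d/2)[y,x'] / P^d[x,x'] (only meaningful when P^d[x,x'] > 0;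
  otherwise an arbitrary convention, this case occurs with probability zero).\<close>
definition bridge :: "('a \<Rightarrow> 'a pmf) \<Rightarrow> nat \<Rightarrow> 'a \<Rightarrow> 'a \<Rightarrow> 'a pmf" where
  "bridge P d x x' =
     (if mpow P d x x' > 0
      then embed_pmf (\<lambda>y. mpow P (d div 2) x y * mpow P (d div 2) y x' / mpow P d x x')
      else return_pmf x)"

fun refine :: "('a \<Rightarrow> 'a pmf) \<Rightarrow> nat \<Rightarrow> 'a list \<Rightarrow> 'a list pmf" where
  "refine P d [] = return_pmf []"
| "refine P d [x] = return_pmf [x]"
| "refine P d (x # x' # xs) =
     bind_pmf (bridge P d x x') (\<lambda>y.
     bind_pmf (refine P d (x' # xs)) (\<lambda>rest. return_pmf (x # y # rest)))"

definition trunc :: "nat \<Rightarrow> 'a list \<Rightarrow> 'a list" where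
  "trunc \<rho> xs =
     (if \<rho> \<le> card (set xs)
      then take (Suc (LEAST k. \<rho> \<le> card (set (take (Suc k) xs)))) xs
      else xs)"

text \<open>Distribution of W_(k+1) (k = 0, ..., L), with \<ell> = 2^L.
  Level i = k+1 uses spacing \<delta> = \<ell> / 2^(i-1) = 2^L div 2^k.\<close>
primrec alg :: "('a \<Rightarrow> 'a pmf) \<Rightarrow> nat \<Rightarrow> nat \<Rightarrow> 'a \<Rightarrow> nat \<Rightarrow> 'a list pmf" where
  "alg P \<rho> L w0 0 =
     map_pmf (\<lambda>wl. trunc \<rho> [w0, wl]) (kpow P (2 ^ L) w0)"
| "alg P \<rho> L w0 (Suc k) =
     bind_pmf (alg P \<rho> L w0 k) (\<lambda>W. map_pmf (trunc \<rho>) (refine P (2 ^ L div 2 ^ k) W))"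

primrec traj :: "('a \<Rightarrow> 'a pmf) \<Rightarrow> nat \<Rightarrow> 'a \<Rightarrow> 'a list pmf" where
  "traj P 0 w = return_pmf [w]"
| "traj P (Suc n) w = bind_pmf (P w) (\<lambda>w'. map_pmf (\<lambda>xs. w # xs) (traj P n w'))"

definition tau :: "nat \<Rightarrow> nat \<Rightarrow> 'a list \<Rightarrow> nat" where
  "tau l \<rho> xs =
     (if \<exists>t\<le>l. \<rho> \<le> card (set (take (Suc t) xs))
      then min l (LEAST t. \<rho> \<le> card (set (take (Suc t) xs)))
      else l)"

end

theory Submission
  imports Defs
begin

text \<open>If V is a trajectory of the chain with kernel P^(2e) observed for n steps, then inserting
  an independent bridge midpoint into every gap yields a trajectory of the chain with kernel P^e
  observed for 2n steps: by Chapman--Kolmogorov and Bayes' rule, drawing a P^(2e)-step and then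
  the bridge midpoint is the same as drawing two consecutive P^e-steps. Truncation at the first
  appearance of the \<rho>-th distinct vertex commutes with refinement, because refining a prefix
  gives a prefix of the refinement and refining only adds vertices. Starting from the one-step
  skeleton [w0, w_\<ell>] and refining L times therefore produces the truncated path of P itself.\<close>

lemma pmf_bind_finite:
  fixes M :: "'a::finite pmf"
  shows "pmf (bind_pmf M f) x = (\<Sum>y\<in>UNIV. pmf M y * pmf (f y) x)"
  unfolding pmf_bind by (subst integral_measure_pmf[of UNIV]) (auto simp: mult.commute)

lemma kpow_add: "kpow P (a + b) x = bind_pmf (kpow P a x) (kpow P b)"
proof (induction a arbitrary: x)
  case (Suc a)
  have "kpow P (a + b) = (\<lambda>x. bind_pmf (kpow P a x) (kpow P b))"
    using Suc.IH by (rule ext)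
  then show ?case by (simp add: bind_assoc_pmf)
qed (simp add: bind_return_pmf)

lemma kpow_Suc_0: "kpow P (Suc 0) = P"
proof -
  have "kpow P 0 = return_pmf" by (rule ext) simp
  then show ?thesis by (intro ext) (simp add: bind_return_pmf')
qed

lemma mpow_nonneg: "mpow P n x y \<ge> 0"
  by (simp add: mpow_def)

lemma mpow_double:
  fixes P :: "'a::finite \<Rightarrow> 'a pmf"
  shows "mpow P (2 * e) x z = (\<Sum>y\<in>UNIV. mpow P e x y * mpow P e y z)"
  unfolding mpow_def mult_2 kpow_add pmf_bind_finite ..

lemma pmf_bridge:
  fixes P :: "'a::finite \<Rightarrow> 'a pmf"
  assumes pos: "mpow P (2 * e) x z > 0"
  shows "pmf (bridge P (2 * e) x z) y = mpow P e x y * mpow P e y z / mpow P (2 * e) x z"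
proof -
  let ?q = "\<lambda>y. mpow P e x y * mpow P e y z / mpow P (2 * e) x z"
  have q_nonneg: "\<And>y. 0 \<le> ?q y"
    using pos by (simp add: mpow_nonneg)
  have "(\<Sum>y\<in>UNIV. ?q y) = 1"
    using pos by (simp add: sum_divide_distrib[symmetric] mpow_double[symmetric])
  then have "(\<integral>\<^sup>+y. ennreal (?q y) \<partial>count_space UNIV) = 1"
    by (subst nn_integral_count_space_finite) (auto simp: sum_ennreal q_nonneg)
  then show ?thesis
    using pos by (simp add: bridge_def pmf_embed_pmf q_nonneg)
qed

lemma pmf_map_Pair_left: "pmf (map_pmf (Pair u) M) (y, z) = (if u = y then pmf M z else 0)"
  by (cases "u = y") (auto simp: pmf_map vimage_def measure_pmf_single)

lemma pmf_map_Pair_right: "pmf (map_pmf (\<lambda>y. (y, v)) M) (y, z) = (if v = z then pmf M y else 0)"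
  by (cases "v = z") (auto simp: pmf_map vimage_def measure_pmf_single)

lemma kpow_pair_eq_bridge_pair:
  fixes P :: "'a::finite \<Rightarrow> 'a pmf"
  shows "bind_pmf (kpow P e x) (\<lambda>y. map_pmf (Pair y) (kpow P e y))
       = bind_pmf (kpow P (2 * e) x) (\<lambda>z. map_pmf (\<lambda>y. (y, z)) (bridge P (2 * e) x z))"
    (is "?lhs = ?rhs")
proof (rule pmf_eqI)
  fix yz :: "'a \<times> 'a"
  obtain y z where yz: "yz = (y, z)" by force
  have lhs: "pmf ?lhs yz = mpow P e x y * mpow P e y z"
    unfolding yz pmf_bind_finite mpow_def
    by (simp add: pmf_map_Pair_left if_distrib cong: if_cong)
  have rhs: "pmf ?rhs yz = mpow P (2 * e) x z * pmf (bridge P (2 * e) x z) y"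
    unfolding yz pmf_bind_finite mpow_def
    by (simp add: pmf_map_Pair_right if_distrib cong: if_cong)
  show "pmf ?lhs yz = pmf ?rhs yz"
  proof (cases "mpow P (2 * e) x z > 0")
    case True
    then show ?thesis unfolding lhs rhs by (simp add: pmf_bridge)
  next
    case False
    then have "(\<Sum>y\<in>UNIV. mpow P e x y * mpow P e y z) = 0"
      using mpow_nonneg[of P "2 * e" x z] by (simp add: mpow_double)
    then have "mpow P e x y * mpow P e y z = 0"
      by (subst (asm) sum_nonneg_eq_0_iff) (auto simp: mpow_nonneg)
    with False show ?thesis
      unfolding lhs rhs using mpow_nonneg[of P "2 * e" x z] by simp
  qed
qed

lemma bind_kpow_kpow_eq_bridge:
  fixes P :: "'a::finite \<Rightarrow> 'a pmf"
  shows "bind_pmf (kpow P e x) (\<lambda>y. bind_pmf (kpow P e y) (g y))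
       = bind_pmf (kpow P (2 * e) x) (\<lambda>z. bind_pmf (bridge P (2 * e) x z) (\<lambda>y. g y z))"
proof -
  have "bind_pmf (kpow P e x) (\<lambda>y. bind_pmf (kpow P e y) (g y))
      = bind_pmf (bind_pmf (kpow P e x) (\<lambda>y. map_pmf (Pair y) (kpow P e y))) (case_prod g)"
    by (simp add: map_pmf_def bind_assoc_pmf bind_return_pmf)
  also have "\<dots> = bind_pmf (bind_pmf (kpow P (2 * e) x)
                    (\<lambda>z. map_pmf (\<lambda>y. (y, z)) (bridge P (2 * e) x z))) (case_prod g)"
    by (simp only: kpow_pair_eq_bridge_pair)
  also have "\<dots> = bind_pmf (kpow P (2 * e) x) (\<lambda>z. bind_pmf (bridge P (2 * e) x z) (\<lambda>y. g y z))"
    by (simp add: map_pmf_def bind_assoc_pmf bind_return_pmf)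
  finally show ?thesis .
qed

lemma set_pmf_traj: "xs \<in> set_pmf (traj P n w) \<Longrightarrow> length xs = Suc n \<and> hd xs = w"
  by (induction n arbitrary: w xs) auto

lemma set_pmf_refine:
  "R \<in> set_pmf (refine P d W) \<Longrightarrow> W \<noteq> [] \<Longrightarrow> R \<noteq> [] \<and> hd R = hd W \<and> set W \<subseteq> set R"
proof (induction P d W arbitrary: R rule: refine.induct)
  case (3 P d x x' xs)
  then obtain y r where "y \<in> set_pmf (bridge P d x x')"
      "r \<in> set_pmf (refine P d (x' # xs))" "R = x # y # r"
    by auto
  with "3.IH"[of y r] show ?case by auto
qed auto

lemma refine_append:
  "refine P d (xs @ x # ys) =
     bind_pmf (refine P d (xs @ [x])) (\<lambda>R. map_pmf (\<lambda>R'. R @ tl R') (refine P d (x # ys)))"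
proof (induction xs)
  case Nil
  have "map_pmf (\<lambda>R'. [x] @ tl R') (refine P d (x # ys)) = map_pmf id (refine P d (x # ys))"
    by (rule map_pmf_cong) (auto dest!: set_pmf_refine simp: neq_Nil_conv)
  then show ?case by (simp add: bind_return_pmf)
next
  case (Cons a xs)
  show ?case
  proof (cases xs)
    case Nil
    have "bind_pmf (refine P d (x # ys)) (\<lambda>R. return_pmf (a # y # R))
        = bind_pmf (refine P d (x # ys)) (\<lambda>R. return_pmf (a # y # x # tl R))" for y
      by (rule bind_pmf_cong) (auto dest!: set_pmf_refine simp: neq_Nil_conv)
    then show ?thesis
      using Nil by (simp add: map_pmf_def bind_assoc_pmf bind_return_pmf)
  next
    case Cons
    with Cons.IH show ?thesis by (simp add: map_pmf_def bind_assoc_pmf bind_return_pmf)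
  qed
qed

lemma refine_traj_kpow_double:
  fixes P :: "'a::finite \<Rightarrow> 'a pmf"
  shows "bind_pmf (traj (kpow P (2 * e)) n w) (refine P (2 * e)) = traj (kpow P e) (2 * n) w"
proof (induction n arbitrary: w)
  case 0
  then show ?case by (simp add: bind_return_pmf)
next
  case (Suc n)
  have refine_Cons: "refine P (2 * e) (w # V) =
      bind_pmf (bridge P (2 * e) w z) (\<lambda>y. map_pmf (\<lambda>R. w # y # R) (refine P (2 * e) V))"
    if V: "V \<in> set_pmf (traj (kpow P (2 * e)) n z)" for z V
  proof -
    obtain V' where "V = z # V'"
      using set_pmf_traj[OF V] by (cases V) auto
    then show ?thesis by (simp add: map_pmf_def)
  qed
  have "bind_pmf (traj (kpow P (2 * e)) (Suc n) w) (refine P (2 * e)) =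
      bind_pmf (kpow P (2 * e) w) (\<lambda>z. bind_pmf (traj (kpow P (2 * e)) n z)
        (\<lambda>V. refine P (2 * e) (w # V)))"
    by (simp add: map_pmf_def bind_assoc_pmf bind_return_pmf)
  also have "\<dots> = bind_pmf (kpow P (2 * e) w) (\<lambda>z. bind_pmf (traj (kpow P (2 * e)) n z) (\<lambda>V.
      bind_pmf (bridge P (2 * e) w z) (\<lambda>y. map_pmf (\<lambda>R. w # y # R) (refine P (2 * e) V))))"
    by (intro bind_pmf_cong refl refine_Cons)
  also have "\<dots> = bind_pmf (kpow P (2 * e) w) (\<lambda>z. bind_pmf (bridge P (2 * e) w z) (\<lambda>y.
      map_pmf (\<lambda>R. w # y # R) (bind_pmf (traj (kpow P (2 * e)) n z) (refine P (2 * e)))))"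
    by (subst bind_commute_pmf) (simp add: map_bind_pmf)
  also have "\<dots> = bind_pmf (kpow P (2 * e) w) (\<lambda>z. bind_pmf (bridge P (2 * e) w z) (\<lambda>y.
      map_pmf (\<lambda>R. w # y # R) (traj (kpow P e) (2 * n) z)))"
    by (simp only: Suc.IH)
  also have "\<dots> = bind_pmf (kpow P e w) (\<lambda>y. bind_pmf (kpow P e y) (\<lambda>z.
      map_pmf (\<lambda>R. w # y # R) (traj (kpow P e) (2 * n) z)))"
    by (rule bind_kpow_kpow_eq_bridge[symmetric])
  also have "\<dots> = traj (kpow P e) (2 * Suc n) w"
    by (simp add: map_pmf_def bind_assoc_pmf bind_return_pmf)
  finally show ?case .
qed

lemma trunc_append:
  assumes "xs \<noteq> []" and "\<rho> \<le> card (set xs)"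
  shows "trunc \<rho> (xs @ ys) = trunc \<rho> xs"
proof -
  let ?Q = "\<lambda>zs k. \<rho> \<le> card (set (take (Suc k) zs))"
  define k0 where "k0 = (LEAST k. ?Q xs k)"
  have Q_last: "?Q xs (length xs - 1)"
    using assms by simp
  have Q_k0: "?Q xs k0"
    unfolding k0_def using Q_last by (rule LeastI)
  have k0_bound: "Suc k0 \<le> length xs"
    using Least_le[of "?Q xs", OF Q_last] assms(1) unfolding k0_def[symmetric] by (cases xs) auto
  have take_Suc_prefix: "take (Suc k) (xs @ ys) = take (Suc k) xs" if "k \<le> k0" for k
    using that k0_bound by simp
  have "(LEAST k. ?Q (xs @ ys) k) = k0"
  proof (rule Least_equality)
    show "?Q (xs @ ys) k0"
      unfolding take_Suc_prefix[OF order_refl] by (rule Q_k0)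
    show "k0 \<le> k" if "?Q (xs @ ys) k" for k
    proof (rule ccontr)
      assume "\<not> k0 \<le> k"
      then have "k \<le> k0" by simp
      have "?Q xs k"
        using that unfolding take_Suc_prefix[OF \<open>k \<le> k0\<close>] .
      then show False
        using \<open>\<not> k0 \<le> k\<close> Least_le[of "?Q xs" k] unfolding k0_def by simp
    qed
  qed
  moreover have "\<rho> \<le> card (set (xs @ ys))"
    using assms(2) card_mono[of "set (xs @ ys)" "set xs"] by auto
  ultimately have "trunc \<rho> (xs @ ys) = take (Suc k0) (xs @ ys)"
    unfolding trunc_def by (simp only: if_True)
  also have "\<dots> = take (Suc k0) xs"
    by (rule take_Suc_prefix[OF order_refl])
  also have "\<dots> = trunc \<rho> xs"
    unfolding trunc_def k0_def[symmetric] using assms(2) by (simp only: if_True)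
  finally show ?thesis .
qed

lemma map_trunc_refine_append:
  assumes "A \<noteq> []" and "\<rho> \<le> card (set A)"
  shows "map_pmf (trunc \<rho>) (refine P d (A @ ys)) = map_pmf (trunc \<rho>) (refine P d A)"
proof -
  obtain xs x where A: "A = xs @ [x]"
    using assms(1) by (metis rev_exhaust)
  have "map_pmf (trunc \<rho>) (refine P d (A @ ys)) =
      bind_pmf (refine P d A) (\<lambda>R. map_pmf (\<lambda>R'. trunc \<rho> (R @ tl R')) (refine P d (x # ys)))"
    unfolding A append_assoc append_Cons append_Nil refine_append[of P d xs x ys]
    by (simp add: map_bind_pmf pmf.map_comp o_def)
  also have "\<dots> = bind_pmf (refine P d A) (\<lambda>R. map_pmf (\<lambda>_. trunc \<rho> R) (refine P d (x # ys)))"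
  proof (intro bind_pmf_cong map_pmf_cong refl)
    fix R R' assume "R \<in> set_pmf (refine P d A)"
    with assms(1) have "R \<noteq> []" "set A \<subseteq> set R"
      using set_pmf_refine by blast+
    with assms(2) have "\<rho> \<le> card (set R)"
      using card_mono[of "set R" "set A"] by simp
    with \<open>R \<noteq> []\<close> show "trunc \<rho> (R @ tl R') = trunc \<rho> R"
      by (rule trunc_append)
  qed
  also have "\<dots> = map_pmf (trunc \<rho>) (refine P d A)"
    by (simp add: map_pmf_def bind_return_pmf)
  finally show ?thesis .
qed

lemma map_trunc_refine_trunc:
  "map_pmf (trunc \<rho>) (refine P d (trunc \<rho> V)) = map_pmf (trunc \<rho>) (refine P d V)"
proof (cases "V \<noteq> [] \<and> \<rho> \<le> card (set V)")
  case True
  let ?Q = "\<lambda>k. \<rho> \<le> card (set (take (Suc k) V))"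
  define A where "A = take (Suc (LEAST k. ?Q k)) V"
  have "?Q (LEAST k. ?Q k)"
    by (rule LeastI[of ?Q "length V - 1"]) (use True in simp)
  then have "A \<noteq> []" "\<rho> \<le> card (set A)"
    using True unfolding A_def by auto
  moreover have "trunc \<rho> V = A"
    using True unfolding trunc_def A_def by simp
  moreover obtain ys where "V = A @ ys"
    unfolding A_def by (metis append_take_drop_id)
  ultimately show ?thesis
    using map_trunc_refine_append[of A \<rho> P d ys] by simp
next
  case False
  then show ?thesis by (auto simp: trunc_def)
qed

lemma trunc_eq_take_tau:
  assumes "length xs = Suc l"
  shows "trunc \<rho> xs = take (Suc (tau l \<rho> xs)) xs"
proof (cases "\<rho> \<le> card (set xs)")
  case True
  let ?Q = "\<lambda>t. \<rho> \<le> card (set (take (Suc t) xs))"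
  have "?Q l"
    using True assms by simp
  then have "(LEAST t. ?Q t) \<le> l" "\<exists>t\<le>l. ?Q t"
    by (auto intro: Least_le)
  with True show ?thesis
    unfolding tau_def trunc_def by (simp add: min_absorb2)
next
  case False
  have "card (set (take (Suc t) xs)) \<le> card (set xs)" for t
    by (rule card_mono) (auto dest: in_set_takeD)
  with False have "\<not> (\<exists>t\<le>l. \<rho> \<le> card (set (take (Suc t) xs)))"
    using le_trans by blast
  then have "tau l \<rho> xs = l"
    unfolding tau_def by (simp only: if_False)
  with False assms show ?thesis
    unfolding trunc_def by simp
qed

lemma alg_eq_trunc_traj:
  fixes P :: "'a::finite \<Rightarrow> 'a pmf"
  assumes "k \<le> L"
  shows "alg P \<rho> L w0 k = map_pmf (trunc \<rho>) (traj (kpow P (2 ^ (L - k))) (2 ^ k) w0)"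
  using assms
proof (induction k)
  case 0
  then show ?case by (simp add: map_pmf_def bind_assoc_pmf bind_return_pmf)
next
  case (Suc k)
  define e :: nat where "e = 2 ^ (L - Suc k)"
  have "(2::nat) ^ (L - k) = 2 * e"
    using Suc.prems by (simp add: e_def Suc_diff_Suc flip: power_Suc)
  moreover have "2 ^ L div 2 ^ k = (2::nat) ^ (L - k)"
    using Suc.prems by (simp add: power_diff)
  ultimately have spacing: "2 ^ L div 2 ^ k = 2 * e" "2 ^ (L - k) = 2 * e"
    by simp_all
  have "alg P \<rho> L w0 (Suc k) = bind_pmf (traj (kpow P (2 * e)) (2 ^ k) w0)
      (\<lambda>V. map_pmf (trunc \<rho>) (refine P (2 * e) (trunc \<rho> V)))"
    using Suc by (simp add: spacing map_pmf_def bind_assoc_pmf bind_return_pmf)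
  also have "\<dots> = map_pmf (trunc \<rho>) (bind_pmf (traj (kpow P (2 * e)) (2 ^ k) w0) (refine P (2 * e)))"
    by (simp add: map_trunc_refine_trunc map_bind_pmf)
  also have "\<dots> = map_pmf (trunc \<rho>) (traj (kpow P e) (2 ^ Suc k) w0)"
    by (simp add: refine_traj_kpow_double)
  finally show ?case by (simp add: e_def)
qed

theorem mainTheorem6:
  fixes P :: "'a::finite \<Rightarrow> 'a pmf" and L \<rho> :: nat and w0 :: 'a
  assumes "\<rho> \<ge> 1"
  shows "alg P \<rho> L w0 L =
         map_pmf (\<lambda>xs. take (Suc (tau (2 ^ L) \<rho> xs)) xs) (traj P (2 ^ L) w0)"
proof -
  have "alg P \<rho> L w0 L = map_pmf (trunc \<rho>) (traj P (2 ^ L) w0)"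
    by (simp add: alg_eq_trunc_traj kpow_Suc_0)
  also have "\<dots> = map_pmf (\<lambda>xs. take (Suc (tau (2 ^ L) \<rho> xs)) xs) (traj P (2 ^ L) w0)"
    by (intro map_pmf_cong refl trunc_eq_take_tau) (simp add: set_pmf_traj)
  finally show ?thesis .
qed

end
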